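(* Let $F_0\in\mathcal F$. For all $x<1/2$ and all integers $t>0$, $$F_{3,t}(x)\le \tfrac34\, F_{3,t-1}(x) + F_{3,t-1}(x)^3,$$ and consequently $$F_{3,t}(x)\le F_0(x)\cdot\left[\tfrac34 + F_0(x)^2\right]^t.$$
   Context: Voters form a continuum uniformly distributed on $[0,1]$. Candidates occupy points of $[0,1]$ and each voter votes for the nearest candidate. For candidates at distinct positions, the vote share of a candidate is the measure of the set of voters closer to it than to any other candidate: half the distance between its left and right neighbours, where a leftmost candidate at $y$ additionally receives all of $[0,y]$ and a rightmost candidate at $y$ additionally receives all of $[y,1]$. The plurality winner is the candidate with largest vote share, ties broken uniformly at random. Write $\mathrm{plurality}(x_1,\dots,x_k)$ for the (random) position of the plurality winner. Replicator dynamics: given a probability distribution $F_0$ on $[0,1]$ (identified with its CDF) and an integer $k\ge 2$, set $F_{k,0}=F_0$, and for $t\ge 1$ let $F_{k,t}(x)=\Pr(\mathrm{plurality}(X_{1,t},\dots,X_{k,t})\le x)$, where $X_{1,t},\dots,X_{k,t}$ are i.i.d. with distribution $F_{k,t-1}$. $\mathcal F$ denotes the set of probability distributions on $[0,1]$ that are symmetric about $1/2$ and atomless (continuous CDF). *)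

theory Defs
  imports "HOL-Probability.Probability"
begin

text \<open>Candidate positions for k candidates are functions xs :: nat => real,
  only the values at indices i < k matter.  For distinct positions this is exactly the
  measure of the set of voters closer to candidate i than to any other candidate
  (ties between positions are voter sets of measure zero).\<close>
definition vote_share :: "nat \<Rightarrow> (nat \<Rightarrow> real) \<Rightarrow> nat \<Rightarrow> real" where
  "vote_share k xs i =
     measure lborel {v \<in> {0..1}. \<forall>j<k. xs j \<noteq> xs i \<longrightarrow> \<bar>v - xs i\<bar> < \<bar>v - xs j\<bar>}
       / real (card {j. j < k \<and> xs j = xs i})"

definition winners :: "nat \<Rightarrow> (nat \<Rightarrow> real) \<Rightarrow> nat set" where
  "winners k xs = {i. i < k \<and> (\<forall>j<k. vote_share k xs j \<le> vote_share k xs i)}"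

text \<open>One step of the replicator dynamics: draw k i.i.d. positions from M,
  the plurality winner (ties broken uniformly at random among winners) has position
  distributed according to the resulting measure.\<close>
definition plurality_step :: "nat \<Rightarrow> real measure \<Rightarrow> real measure" where
  "plurality_step k M =
     bind (PiM {..<k} (\<lambda>_. M))
          (\<lambda>xs. distr (measure_pmf (pmf_of_set (winners k xs))) borel xs)"

definition replicator :: "nat \<Rightarrow> real measure \<Rightarrow> nat \<Rightarrow> real measure" where
  "replicator k M0 t = (plurality_step k ^^ t) M0"

definition replicator_cdf :: "nat \<Rightarrow> real measure \<Rightarrow> nat \<Rightarrow> real \<Rightarrow> real" where
  "replicator_cdf k M0 t x = measure (replicator k M0 t) {..x}"

definition in_class_F :: "real measure \<Rightarrow> bool" where
  "in_class_F M \<longleftrightarrow> prob_space M \<and> sets M = sets borel \<and> measure M {0..1} = 1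
     \<and> distr M borel (\<lambda>x. 1 - x) = M \<and> (\<forall>x. measure M {x} = 0)"

end

theory Submission
  imports Defs
begin

text \<open>
  Sort the positions relative to \<open>x < 1/2\<close> into four zones: outer left \<open>[.., x]\<close>, inner left
  \<open>(x, 1/2]\<close>, inner right \<open>(1/2, 1 - x)\<close> and outer right \<open>[1 - x, ..]\<close>. Comparing the voter
  intervals of neighbouring candidates shows that for three distinct positions every plurality
  winner is inner as soon as the zone profile is inner-forcing: no outer candidate, two outer
  candidates on the same side, or a single outer candidate facing two inner ones of which at least
  one lies on its own side of \<open>1/2\<close>. Positions are almost surely distinct because \<open>F\<close> is atomless,
  and by symmetry the outer zones have mass \<open>F(x)\<close> and the inner ones \<open>1/2 - F(x)\<close> each, so the
  inner-forcing profiles have probability \<open>1 - 3/2 F(x) - 2 F(x)^3\<close>. The next distribution is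
  again symmetric, so its mass below \<open>x\<close> is half of what the inner winners leave, at most
  \<open>3/4 F(x) + F(x)^3\<close>. It is also atomless and supported in \<open>[0, 1]\<close>, which lets the step be
  iterated; as \<open>F(x) \<le> 1/2\<close> the values decrease and the product bound follows.
\<close>

section \<open>Vote shares and winners\<close>

definition voter_region :: "nat \<Rightarrow> (nat \<Rightarrow> real) \<Rightarrow> nat \<Rightarrow> real set" where
  "voter_region k xs i = {v \<in> {0..1}. \<forall>j<k. xs j \<noteq> xs i \<longrightarrow> \<bar>v - xs i\<bar> < \<bar>v - xs j\<bar>}"

lemma vote_share_eq:
  "vote_share k xs i = measure lborel (voter_region k xs i) / card {j. j < k \<and> xs j = xs i}"
  unfolding vote_share_def voter_region_def ..

lemma voter_region_subset: "voter_region k xs i \<subseteq> {0..1}"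
  by (auto simp: voter_region_def)

lemma sets_voter_region [measurable]: "voter_region k xs i \<in> sets borel"
proof -
  have "voter_region k xs i
      = {0..1} \<inter> {v \<in> space borel. \<forall>j<k. xs j \<noteq> xs i \<longrightarrow> \<bar>v - xs i\<bar> < \<bar>v - xs j\<bar>}"
    by (auto simp: voter_region_def)
  also have "\<dots> \<in> sets borel" by measurable
  finally show ?thesis .
qed

lemma fmeasurable_voter_region: "voter_region k xs i \<in> fmeasurable lborel"
  by (rule fmeasurableI2[of "{0..1}"]) (auto simp: fmeasurable_def voter_region_subset)

lemma measure_voter_region_ge:
  assumes "{a<..1} \<subseteq> voter_region k xs i" "a \<le> 1"
  shows "1 - a \<le> measure lborel (voter_region k xs i)"
  using measure_mono_fmeasurable[OF assms(1) _ fmeasurable_voter_region] assms(2) by simp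

lemma measure_voter_region_le:
  assumes "voter_region k xs i \<subseteq> {0..b}" "0 \<le> b"
  shows "measure lborel (voter_region k xs i) \<le> b"
proof -
  have "measure lborel (voter_region k xs i) \<le> measure lborel {0..b}"
    by (rule measure_mono_fmeasurable[OF assms(1)]) (use assms(2) in \<open>auto simp: fmeasurable_def\<close>)
  then show ?thesis using assms(2) by simp
qed

lemma voter_regions_disjoint:
  "xs i \<noteq> xs j \<Longrightarrow> i < k \<Longrightarrow> j < k \<Longrightarrow> voter_region k xs i \<inter> voter_region k xs j = {}"
  by (fastforce simp: voter_region_def)

lemma vote_share_le_voter_region: "vote_share k xs i \<le> measure lborel (voter_region k xs i)"
proof -
  define m where "m = measure lborel (voter_region k xs i)"
  have "0 \<le> m" by (simp add: m_def)
  then have le: "m / real n \<le> m" for n :: nat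
    by (cases n) (auto simp: divide_le_eq mult_le_cancel_left1)
  show ?thesis unfolding vote_share_eq m_def[symmetric] by (rule le)
qed

lemma vote_share_eq_voter_region:
  assumes "i < k" "\<forall>j<k. xs j = xs i \<longrightarrow> j = i"
  shows "vote_share k xs i = measure lborel (voter_region k xs i)"
proof -
  have "{j. j < k \<and> xs j = xs i} = {i}" using assms by auto
  then show ?thesis by (simp add: vote_share_eq)
qed

lemma winners_subset: "winners k xs \<subseteq> {..<k}"
  by (auto simp: winners_def)

lemma finite_winners: "finite (winners k xs)"
  using winners_subset finite_subset by blast

lemma winners_nonempty:
  assumes "0 < k" shows "winners k xs \<noteq> {}"
proof -
  let ?f = "vote_share k xs"
  obtain i where "i < k" "?f i = Max (?f ` {..<k})"
    using Max_in[of "?f ` {..<k}"] assms by fastforce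
  then have "i \<in> winners k xs" by (simp add: winners_def)
  then show ?thesis by blast
qed

lemma winners_cong:
  assumes "\<And>l. l < k \<Longrightarrow> xs l = ys l" shows "winners k xs = winners k ys"
proof -
  have "voter_region k xs i = voter_region k ys i" "{j. j < k \<and> xs j = xs i} = {j. j < k \<and> ys j = ys i}"
    if "i < k" for i
    using assms that by (auto simp: voter_region_def)
  then have "vote_share k xs i = vote_share k ys i" if "i < k" for i
    using that by (simp only: vote_share_eq)
  then show ?thesis unfolding winners_def by auto
qed

lemma winners_eq_singleton_if_majority:
  assumes "i < k" "\<forall>j<k. xs j = xs i \<longrightarrow> j = i" "1/2 < measure lborel (voter_region k xs i)"
  shows "winners k xs = {i}"
proof -
  have "vote_share k xs j < vote_share k xs i" if "j < k" "j \<noteq> i" for j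
  proof -
    have sub: "voter_region k xs j \<subseteq> {0..1} - voter_region k xs i"
      using voter_regions_disjoint[of xs j i k] voter_region_subset[of k xs j] assms that by auto
    have fin: "{0..1} - voter_region k xs i \<in> fmeasurable lborel"
      by (rule fmeasurableI2[of "{0..1}"]) (auto simp: fmeasurable_def)
    have "measure lborel (voter_region k xs j) \<le> measure lborel ({0..1} - voter_region k xs i)"
      using measure_mono_fmeasurable[OF sub _ fin] by simp
    also have "\<dots> = 1 - measure lborel (voter_region k xs i)"
      by (subst measure_Diff) (auto simp: voter_region_subset)
    finally show ?thesis
      using vote_share_le_voter_region[of k xs j] vote_share_eq_voter_region[OF assms(1,2)] assms(3)
      by linarith
  qed
  then show ?thesis using assms(1) by (force simp: winners_def)
qed

lemma winners_eq_singleton_if_others_left: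
  assumes "i < k" "\<forall>l<k. l \<noteq> i \<longrightarrow> xs l \<le> x" "x < xs i" "xs i < 1 - x"
  shows "winners k xs = {i}"
proof (rule winners_eq_singleton_if_majority)
  define a where "a = max 0 ((x + xs i) / 2)"
  have "{a<..1} \<subseteq> voter_region k xs i"
    using assms by (force simp: voter_region_def a_def abs_if)
  moreover have "1/2 < 1 - a" using assms by (simp add: a_def max_def)
  ultimately show "1/2 < measure lborel (voter_region k xs i)"
    using measure_voter_region_ge[of a] by fastforce
qed (use assms in force)+

lemma voter_region_reflect:
  "voter_region k (\<lambda>l. 1 - xs l) i = (\<lambda>v. 1 - v) -` voter_region k xs i"
  unfolding voter_region_def by (auto simp: abs_minus_commute)

lemma vote_share_reflect: "vote_share k (\<lambda>l. 1 - xs l) i = vote_share k xs i"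
proof -
  have "distr lborel borel (\<lambda>v::real. 1 - v) = distr (distr lborel borel uminus) borel ((+) 1)"
    by (subst distr_distr) (auto simp: comp_def)
  also have "\<dots> = lborel" by (simp add: lborel_distr_uminus lborel_distr_plus)
  finally have "measure lborel ((\<lambda>v. 1 - v) -` voter_region k xs i)
      = measure lborel (voter_region k xs i)"
    using measure_distr[of "\<lambda>v::real. 1 - v" lborel borel "voter_region k xs i"] by simp
  then show ?thesis unfolding vote_share_eq voter_region_reflect by simp
qed

lemma winners_reflect: "winners k (\<lambda>l. 1 - xs l) = winners k xs"
  unfolding winners_def vote_share_reflect ..

section \<open>Three candidates\<close>

lemma lessThan_3: "{..<3::nat} = {0, 1, 2}"
  by auto

lemma all_less_3_eq:
  assumes "{i, j, k} = {..<3::nat}" shows "(\<forall>l<3. P l) \<longleftrightarrow> P i \<and> P j \<and> P k"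
proof -
  have "l < 3 \<longleftrightarrow> l = i \<or> l = j \<or> l = k" for l
    using assms by (metis empty_iff insert_iff lessThan_iff)
  then show ?thesis by auto
qed

text \<open>The share of \<open>i\<close> is at most \<open>(xs i + xs j)/2\<close>, that of \<open>k\<close> at least \<open>1 - (xs j + xs k)/2\<close>,
  and the latter is larger because \<open>xs i + xs k < 1\<close> and \<open>xs j \<le> 1/2\<close>.\<close>

lemma left_not_winner_if_inner_pair:
  assumes ijk: "{i, j, k} = {..<3::nat}" and unit: "\<forall>l<3. xs l \<in> {0..1}"
    and pos: "xs i \<le> x" "x < xs j" "xs j < xs k" "xs k < 1 - x" "xs j \<le> 1/2"
  shows "i \<notin> winners 3 xs"
proof
  assume winner: "i \<in> winners 3 xs"
  have "i < 3" "j < 3" "k < 3" using ijk by auto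
  have bounds: "0 \<le> xs i" "0 \<le> xs j" "xs k \<le> 1" using unit by (auto simp: all_less_3_eq[OF ijk])
  have "voter_region 3 xs i \<subseteq> {0..(xs i + xs j) / 2}"
  proof
    fix v assume "v \<in> voter_region 3 xs i"
    then have "\<bar>v - xs i\<bar> < \<bar>v - xs j\<bar>" "0 \<le> v"
      using \<open>j < 3\<close> pos by (auto simp: voter_region_def)
    then show "v \<in> {0..(xs i + xs j) / 2}" using pos by (auto simp: abs_if split: if_splits)
  qed
  then have "measure lborel (voter_region 3 xs i) \<le> (xs i + xs j) / 2"
    by (rule measure_voter_region_le) (use bounds in simp)
  then have share_i: "vote_share 3 xs i \<le> (xs i + xs j) / 2"
    using vote_share_le_voter_region[of 3 xs i] by linarith
  have others: "\<forall>l<3. l = k \<or> xs l \<le> xs j"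
    using pos by (auto simp: all_less_3_eq[OF ijk])
  have "{(xs j + xs k) / 2<..1} \<subseteq> voter_region 3 xs k"
    using others pos bounds by (force simp: voter_region_def abs_if)
  then have "1 - (xs j + xs k) / 2 \<le> measure lborel (voter_region 3 xs k)"
    by (rule measure_voter_region_ge) (use pos bounds in simp)
  also have "\<dots> = vote_share 3 xs k"
    using others pos \<open>k < 3\<close> by (intro vote_share_eq_voter_region[symmetric]) force+
  also have "\<dots> \<le> vote_share 3 xs i"
    using winner \<open>k < 3\<close> by (auto simp: winners_def)
  finally show False using share_i pos by argo
qed

lemma outer_left_not_winner:
  assumes ijk: "{i, j, k} = {..<3::nat}" and unit: "\<forall>l<3. xs l \<in> {0..1}" and "xs j \<noteq> xs k"
    and "xs i \<le> x"
    and others: "(xs j \<le> x \<and> x < xs k \<and> xs k < 1 - x) \<or> (xs k \<le> x \<and> x < xs j \<and> xs j < 1 - x)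
      \<or> (x < xs j \<and> xs j < 1 - x \<and> x < xs k \<and> xs k < 1 - x \<and> (xs j \<le> 1/2 \<or> xs k \<le> 1/2))"
  shows "i \<notin> winners 3 xs"
proof -
  have ikj: "{i, k, j} = {..<3::nat}" using ijk by (simp add: insert_commute)
  have "j < 3" "k < 3" using ijk by auto
  from others consider
      "xs j \<le> x" "x < xs k" "xs k < 1 - x"
    | "xs k \<le> x" "x < xs j" "xs j < 1 - x"
    | "x < xs j" "xs j < xs k" "xs k < 1 - x" "xs j \<le> 1/2"
    | "x < xs k" "xs k < xs j" "xs j < 1 - x" "xs k \<le> 1/2"
    using \<open>xs j \<noteq> xs k\<close> by fastforce
  then show ?thesis
  proof cases
    case 1
    then have "winners 3 xs = {k}"
      using \<open>xs i \<le> x\<close> \<open>k < 3\<close>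
      by (intro winners_eq_singleton_if_others_left) (auto simp: all_less_3_eq[OF ijk])
    then show ?thesis using 1 \<open>xs i \<le> x\<close> by auto
  next
    case 2
    then have "winners 3 xs = {j}"
      using \<open>xs i \<le> x\<close> \<open>j < 3\<close>
      by (intro winners_eq_singleton_if_others_left) (auto simp: all_less_3_eq[OF ijk])
    then show ?thesis using 2 \<open>xs i \<le> x\<close> by auto
  next
    case 3
    then show ?thesis using left_not_winner_if_inner_pair[OF ijk unit] \<open>xs i \<le> x\<close> by blast
  next
    case 4
    then show ?thesis using left_not_winner_if_inner_pair[OF ikj unit] \<open>xs i \<le> x\<close> by blast
  qed
qed

lemma outer_right_not_winner:
  assumes ijk: "{i, j, k} = {..<3::nat}" and unit: "\<forall>l<3. xs l \<in> {0..1}" and "xs j \<noteq> xs k"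
    and "1 - x \<le> xs i"
    and others: "(1 - x \<le> xs j \<and> x < xs k \<and> xs k < 1 - x) \<or> (1 - x \<le> xs k \<and> x < xs j \<and> xs j < 1 - x)
      \<or> (x < xs j \<and> xs j < 1 - x \<and> x < xs k \<and> xs k < 1 - x \<and> (1/2 \<le> xs j \<or> 1/2 \<le> xs k))"
  shows "i \<notin> winners 3 xs"
proof -
  have "i \<notin> winners 3 (\<lambda>l. 1 - xs l)"
    by (rule outer_left_not_winner[OF ijk]) (use unit assms(3-) in auto)
  then show ?thesis by (simp add: winners_reflect)
qed

datatype zone = Outer_left | Inner_left | Inner_right | Outer_right

lemma UNIV_zone: "UNIV = {Outer_left, Inner_left, Inner_right, Outer_right}"
  using zone.exhaust by auto

instance zone :: finite
  by standard (simp add: UNIV_zone)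

text \<open>The point \<open>1/2\<close> belongs to \<open>Inner_left\<close>, so the zones are mirror images only up to a
  single point; this is harmless as the distributions are atomless.\<close>

definition zone_of :: "real \<Rightarrow> real \<Rightarrow> zone" where
  "zone_of x y = (if y \<le> x then Outer_left else if y \<le> 1/2 then Inner_left
     else if y < 1 - x then Inner_right else Outer_right)"

lemma zone_of_eq_iff:
  assumes "x < 1/2"
  shows "zone_of x y = Outer_left \<longleftrightarrow> y \<le> x"
    and "zone_of x y = Inner_left \<longleftrightarrow> x < y \<and> y \<le> 1/2"
    and "zone_of x y = Inner_right \<longleftrightarrow> 1/2 < y \<and> y < 1 - x"
    and "zone_of x y = Outer_right \<longleftrightarrow> 1 - x \<le> y"
  using assms by (auto simp: zone_of_def)

lemma pred_zone_of [measurable]: "Measurable.pred borel (\<lambda>y. zone_of x y = z)"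
  by (cases z) (simp_all add: zone_of_def)

definition zone_profile :: "real \<Rightarrow> (nat \<Rightarrow> real) \<Rightarrow> zone multiset" where
  "zone_profile x xs = {#zone_of x (xs 0), zone_of x (xs 1), zone_of x (xs 2)#}"

definition zone_triple :: "real \<Rightarrow> (nat \<Rightarrow> real) \<Rightarrow> zone \<times> zone \<times> zone" where
  "zone_triple x xs = (zone_of x (xs 0), zone_of x (xs 1), zone_of x (xs 2))"

definition inner_forcing :: "zone multiset \<Rightarrow> bool" where
  "inner_forcing Z \<longleftrightarrow>
     (let l = count Z Outer_left; r = count Z Outer_right in
       (l = 0 \<and> r = 0) \<or> (l = 2 \<and> r = 0) \<or> (l = 0 \<and> r = 2)
       \<or> (l = 1 \<and> r = 0 \<and> count Z Inner_right \<le> 1) \<or> (l = 0 \<and> r = 1 \<and> count Z Inner_left \<le> 1))"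

lemma inner_forcing_zone_profile:
  "inner_forcing (zone_profile x xs) \<longleftrightarrow> (\<lambda>(a, b, c). inner_forcing {#a, b, c#}) (zone_triple x xs)"
  by (simp add: zone_profile_def zone_triple_def)

lemma inner_forcing_Outer_left:
  "inner_forcing {#Outer_left, b, c#} \<longleftrightarrow>
     (b = Outer_left \<and> c \<in> {Inner_left, Inner_right}) \<or> (c = Outer_left \<and> b \<in> {Inner_left, Inner_right})
     \<or> (b \<in> {Inner_left, Inner_right} \<and> c \<in> {Inner_left, Inner_right} \<and> (b = Inner_left \<or> c = Inner_left))"
  by (cases b; cases c) (simp_all add: inner_forcing_def)

lemma inner_forcing_Outer_right:
  "inner_forcing {#Outer_right, b, c#} \<longleftrightarrow>
     (b = Outer_right \<and> c \<in> {Inner_left, Inner_right}) \<or> (c = Outer_right \<and> b \<in> {Inner_left, Inner_right})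
     \<or> (b \<in> {Inner_left, Inner_right} \<and> c \<in> {Inner_left, Inner_right} \<and> (b = Inner_right \<or> c = Inner_right))"
  by (cases b; cases c) (simp_all add: inner_forcing_def)

lemma winner_inner_if_inner_forcing:
  assumes x: "x < 1/2" and unit: "\<forall>l<3. xs l \<in> {0..1}" and inj: "inj_on xs {..<3}"
    and forcing: "inner_forcing (zone_profile x xs)"
    and winner: "i \<in> winners 3 xs"
  shows "x < xs i \<and> xs i < 1 - x"
proof (rule ccontr)
  obtain j k where ijk: "{i, j, k} = {..<3::nat}" and "j \<noteq> k" and forcing':
    "inner_forcing {#zone_of x (xs i), zone_of x (xs j), zone_of x (xs k)#}"
  proof -
    consider "i = 0" | "i = 1" | "i = 2" using winner winners_subset by fastforce
    then show ?thesis
    proof cases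
      case 1
      show ?thesis by (rule that[of 1 2]) (use forcing 1 in \<open>auto simp: zone_profile_def\<close>)
    next
      case 2
      show ?thesis by (rule that[of 0 2]) (use forcing 2 in \<open>auto simp: zone_profile_def add_mset_commute\<close>)
    next
      case 3
      show ?thesis by (rule that[of 0 1]) (use forcing 3 in \<open>auto simp: zone_profile_def add_mset_commute\<close>)
    qed
  qed
  have ne: "xs j \<noteq> xs k" using inj ijk \<open>j \<noteq> k\<close> by (auto dest: inj_onD)
  assume "\<not> (x < xs i \<and> xs i < 1 - x)"
  then consider "xs i \<le> x" | "1 - x \<le> xs i" by linarith
  then show False
  proof cases
    case 1
    then have "zone_of x (xs i) = Outer_left" by (simp add: zone_of_eq_iff[OF x])
    with forcing' have "inner_forcing {#Outer_left, zone_of x (xs j), zone_of x (xs k)#}" by simp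
    then show False
      using outer_left_not_winner[OF ijk unit ne 1] winner x
      by (auto simp: inner_forcing_Outer_left zone_of_eq_iff[OF x])
  next
    case 2
    then have "zone_of x (xs i) = Outer_right" by (simp add: zone_of_eq_iff[OF x])
    with forcing' have "inner_forcing {#Outer_right, zone_of x (xs j), zone_of x (xs k)#}" by simp
    then show False
      using outer_right_not_winner[OF ijk unit ne 2] winner x
      by (auto simp: inner_forcing_Outer_right zone_of_eq_iff[OF x])
  qed
qed

lemma sum_inner_forcing:
  fixes q :: "zone \<Rightarrow> real"
  shows "(\<Sum>a\<in>UNIV. \<Sum>b\<in>UNIV. \<Sum>c\<in>UNIV. if inner_forcing {#a, b, c#} then q a * q b * q c else 0)
    = (q Inner_left + q Inner_right) ^ 3
      + 3 * (q Outer_left ^ 2 + q Outer_right ^ 2) * (q Inner_left + q Inner_right)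
      + 3 * q Outer_left * (q Inner_left ^ 2 + 2 * q Inner_left * q Inner_right)
      + 3 * q Outer_right * (q Inner_right ^ 2 + 2 * q Inner_left * q Inner_right)"
  by (simp add: UNIV_zone inner_forcing_def) (simp add: power2_eq_square power3_eq_cube algebra_simps)

section \<open>The plurality winner as a measurable kernel\<close>

lemma real_card_lessThan_filter: "real (card {j. j < (k::nat) \<and> P j}) = (\<Sum>j<k. if P j then 1 else 0)"
proof -
  have "{j. j < k \<and> P j} = {j \<in> {..<k}. P j}" by auto
  then have "real (card {j. j < k \<and> P j}) = (\<Sum>j\<in>{j \<in> {..<k}. P j}. 1)"
    by (simp only: real_of_card)
  also have "\<dots> = (\<Sum>j<k. if P j then 1 else 0)" by (rule sum.inter_filter) simp
  finally show ?thesis .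
qed

lemma sum_filter_triples:
  fixes g :: "'a::finite \<times> 'b::finite \<times> 'c::finite \<Rightarrow> 'd::comm_monoid_add"
  shows "(\<Sum>t | P t. g t) = (\<Sum>a\<in>UNIV. \<Sum>b\<in>UNIV. \<Sum>c\<in>UNIV. if P (a, b, c) then g (a, b, c) else 0)"
proof -
  have "(\<Sum>t | P t. g t) = (\<Sum>t\<in>UNIV. if P t then g t else 0)"
    using sum.inter_filter[of UNIV g P] by simp
  also have "\<dots> = (\<Sum>a\<in>UNIV. \<Sum>bc\<in>UNIV \<times> UNIV. if P (a, bc) then g (a, bc) else 0)"
    by (simp add: sum.cartesian_product UNIV_Times_UNIV[symmetric] del: UNIV_Times_UNIV)
  also have "\<dots> = (\<Sum>a\<in>UNIV. \<Sum>b\<in>UNIV. \<Sum>c\<in>UNIV. if P (a, b, c) then g (a, b, c) else 0)"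
    by (simp add: sum.cartesian_product)
  finally show ?thesis .
qed

lemma (in finite_measure) measure_Collect_eq_sum:
  fixes f :: "'a \<Rightarrow> 'b::finite"
  assumes "\<And>t. {\<omega> \<in> space M. f \<omega> = t} \<in> sets M"
  shows "measure M {\<omega> \<in> space M. P (f \<omega>)} = (\<Sum>t | P t. measure M {\<omega> \<in> space M. f \<omega> = t})"
proof -
  have "{\<omega> \<in> space M. P (f \<omega>)} = (\<Union>t\<in>{t. P t}. {\<omega> \<in> space M. f \<omega> = t})" by auto
  also have "measure M \<dots> = (\<Sum>t | P t. measure M {\<omega> \<in> space M. f \<omega> = t})"
    by (rule finite_measure_finite_Union) (use assms in \<open>auto simp: disjoint_family_on_def\<close>)
  finally show ?thesis .
qed

text \<open>Only used locally: as a global \<open>measurable\<close> rule it matches arbitrary applications.\<close>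

lemma measurable_profile_component:
  "(\<lambda>xs. xs i) \<in> borel_measurable (PiM {..<k} (\<lambda>_. borel :: real measure))"
proof (cases "i < k")
  case False
  then have "xs i = undefined" if "xs \<in> space (PiM {..<k} (\<lambda>_. borel :: real measure))" for xs
    using that by (auto simp: space_PiM PiE_def extensional_def)
  then show ?thesis by (subst measurable_cong[where g = "\<lambda>_. undefined"]) auto
qed simp

text \<open>The voter region is the section at \<open>xs\<close> of a measurable subset of the product space.\<close>

lemma measurable_measure_voter_region [measurable]:
  "(\<lambda>xs. measure lborel (voter_region k xs i)) \<in> borel_measurable (PiM {..<k} (\<lambda>_. borel))"
proof -
  let ?P = "PiM {..<k} (\<lambda>_. borel :: real measure)"
  note measurable_profile_component [measurable]
  define Q where "Q = {z \<in> space (?P \<Otimes>\<^sub>M lborel). snd z \<in> {0..1}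
    \<and> (\<forall>j<k. fst z j \<noteq> fst z i \<longrightarrow> \<bar>snd z - fst z i\<bar> < \<bar>snd z - fst z j\<bar>)}"
  have "Q \<in> sets (?P \<Otimes>\<^sub>M lborel)" unfolding Q_def by measurable
  then have "(\<lambda>xs. enn2real (emeasure lborel (Pair xs -` Q))) \<in> borel_measurable ?P"
    using lborel.measurable_emeasure_Pair by measurable
  moreover have "Pair xs -` Q = voter_region k xs i" if "xs \<in> space ?P" for xs
    using that unfolding Q_def voter_region_def by (auto simp: space_pair_measure)
  ultimately show ?thesis
    by (subst measurable_cong) (auto simp: measure_def)
qed

lemma measurable_vote_share [measurable]:
  "(\<lambda>xs. vote_share k xs i) \<in> borel_measurable (PiM {..<k} (\<lambda>_. borel))"
  unfolding vote_share_eq real_card_lessThan_filter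
  supply measurable_profile_component [measurable]
  by (intro borel_measurable_divide measurable_measure_voter_region) measurable

lemma pred_mem_winners [measurable]:
  "Measurable.pred (PiM {..<k} (\<lambda>_. borel)) (\<lambda>xs. l \<in> winners k xs)"
proof -
  have "l \<in> winners k xs \<longleftrightarrow> l < k \<and> (\<forall>j\<in>{..<k}. vote_share k xs j \<le> vote_share k xs l)" for xs
    by (auto simp: winners_def)
  moreover have "Measurable.pred (PiM {..<k} (\<lambda>_. borel)) (\<lambda>xs. vote_share k xs j \<le> vote_share k xs l)" for j
    unfolding pred_def by (intro borel_measurable_le measurable_vote_share)
  then have "Measurable.pred (PiM {..<k} (\<lambda>_. borel))
      (\<lambda>xs. \<forall>j\<in>{..<k}. vote_share k xs j \<le> vote_share k xs l)"
    by (intro pred_intros_finite) auto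
  ultimately show ?thesis by (cases "l < k") simp_all
qed

text \<open>For \<open>k = 0\<close> there are no winners and \<open>pmf_of_set {}\<close> is junk, hence the hypotheses \<open>0 < k\<close>.\<close>

definition winner_position :: "nat \<Rightarrow> (nat \<Rightarrow> real) \<Rightarrow> real measure" where
  "winner_position k xs = distr (measure_pmf (pmf_of_set (winners k xs))) borel xs"

lemma plurality_step_eq_bind: "plurality_step k M = PiM {..<k} (\<lambda>_. M) \<bind> winner_position k"
  unfolding plurality_step_def winner_position_def ..

lemma prob_space_winner_position: "prob_space (winner_position k xs)"
  unfolding winner_position_def by (rule prob_space.prob_space_distr) (auto simp: prob_space_measure_pmf)

lemma sets_winner_position [simp]: "sets (winner_position k xs) = sets borel"
  by (simp add: winner_position_def)

lemma space_winner_position [simp]: "space (winner_position k xs) = UNIV"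
  using sets_eq_imp_space_eq[OF sets_winner_position] by simp

lemma emeasure_winner_position:
  assumes "0 < k" "A \<in> sets borel"
  shows "emeasure (winner_position k xs) A
    = ennreal (card (winners k xs \<inter> {l. xs l \<in> A}) / card (winners k xs))"
  using assms unfolding winner_position_def
  by (subst emeasure_distr) (auto simp: vimage_def emeasure_pmf_of_set winners_nonempty finite_winners)

lemma card_winners_pos: "0 < k \<Longrightarrow> 0 < card (winners k xs)"
  using winners_nonempty finite_winners by (simp add: card_gt_0_iff)

lemma emeasure_winner_position_eq_1:
  assumes "0 < k" "A \<in> sets borel" "\<forall>l\<in>winners k xs. xs l \<in> A"
  shows "emeasure (winner_position k xs) A = 1"
proof -
  have "winners k xs \<inter> {l. xs l \<in> A} = winners k xs" using assms(3) by blast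
  then have "emeasure (winner_position k xs) A = ennreal (card (winners k xs) / card (winners k xs))"
    unfolding emeasure_winner_position[OF assms(1,2)] by (simp only:)
  also have "\<dots> = 1" using card_winners_pos[OF assms(1)] by simp
  finally show ?thesis .
qed

lemma emeasure_winner_position_eq_0:
  assumes "0 < k" "A \<in> sets borel" "\<forall>l\<in>winners k xs. xs l \<notin> A"
  shows "emeasure (winner_position k xs) A = 0"
proof -
  have "winners k xs \<inter> {l. xs l \<in> A} = {}" using assms(3) by auto
  then show ?thesis unfolding emeasure_winner_position[OF assms(1,2)] by simp
qed

lemma emeasure_winner_position_eq_sum:
  assumes "0 < k" "A \<in> sets borel"
  shows "emeasure (winner_position k xs) A
    = ennreal ((\<Sum>l<k. if l \<in> winners k xs \<and> xs l \<in> A then 1 else 0)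
        / (\<Sum>l<k. if l \<in> winners k xs then 1 else 0))"
proof -
  let ?W = "winners k xs"
  have "{l. l < k \<and> l \<in> ?W \<and> xs l \<in> A} = ?W \<inter> {l. xs l \<in> A}" "{l. l < k \<and> l \<in> ?W} = ?W"
    using winners_subset[of k xs] by auto
  then have cards: "real (card (?W \<inter> {l. xs l \<in> A})) = (\<Sum>l<k. if l \<in> ?W \<and> xs l \<in> A then 1 else 0)"
    "real (card ?W) = (\<Sum>l<k. if l \<in> ?W then 1 else 0)"
    by (simp_all only: flip: real_card_lessThan_filter)
  show ?thesis unfolding emeasure_winner_position[OF assms] cards ..
qed

lemma measurable_winner_position:
  assumes "0 < k"
  shows "winner_position k \<in> measurable (PiM {..<k} (\<lambda>_. borel)) (subprob_algebra borel)"
proof (rule measurable_subprob_algebra)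
  fix A :: "real set" assume A: "A \<in> sets borel"
  show "(\<lambda>xs. emeasure (winner_position k xs) A) \<in> borel_measurable (PiM {..<k} (\<lambda>_. borel))"
    unfolding emeasure_winner_position_eq_sum[OF assms A]
    using A measurable_profile_component [measurable] by measurable
qed (auto intro: prob_space_imp_subprob_space prob_space_winner_position)

lemma winners_reflect_restrict: "winners k (restrict (\<lambda>l. 1 - xs l) {..<k}) = winners k xs"
proof -
  have "winners k (restrict (\<lambda>l. 1 - xs l) {..<k}) = winners k (\<lambda>l. 1 - xs l)"
    by (rule winners_cong) simp
  then show ?thesis by (simp add: winners_reflect)
qed

lemma distr_winner_position_reflect:
  assumes "0 < k"
  shows "distr (winner_position k xs) borel (\<lambda>x. 1 - x) = winner_position k (restrict (\<lambda>l. 1 - xs l) {..<k})"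
proof (rule measure_eqI)
  fix A :: "real set" assume "A \<in> sets (distr (winner_position k xs) borel (\<lambda>x. 1 - x))"
  then have A: "A \<in> sets borel" by simp
  let ?ys = "restrict (\<lambda>l. 1 - xs l) {..<k}"
  have reflect_A: "(\<lambda>x::real. 1 - x) -` A \<in> sets borel" by (rule measurable_sets_borel[OF _ A]) simp
  have same: "winners k xs \<inter> {l. xs l \<in> (\<lambda>x. 1 - x) -` A} = winners k ?ys \<inter> {l. ?ys l \<in> A}"
    using winners_subset[of k xs] by (auto simp: winners_reflect_restrict)
  have "emeasure (distr (winner_position k xs) borel (\<lambda>x. 1 - x)) A
      = emeasure (winner_position k xs) ((\<lambda>x. 1 - x) -` A)"
    using A by (subst emeasure_distr) (auto simp: measurable_cong_sets[OF sets_winner_position refl])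
  also have "\<dots> = emeasure (winner_position k ?ys) A"
    unfolding emeasure_winner_position[OF assms reflect_A] emeasure_winner_position[OF assms A] same
    by (simp only: winners_reflect_restrict)
  finally show "emeasure (distr (winner_position k xs) borel (\<lambda>x. 1 - x)) A = emeasure (winner_position k ?ys) A" .
qed simp

section \<open>One step of the dynamics on the class \<F>\<close>

locale class_F =
  fixes \<mu> :: "real measure"
  assumes in_class_F: "in_class_F \<mu>"
begin

lemma prob_space_F: "prob_space \<mu>"
  using in_class_F by (simp add: in_class_F_def)

sublocale prob_space \<mu>
  by (rule prob_space_F)

lemma sets_eq_borel [simp, measurable_cong]: "sets \<mu> = sets borel"
  using in_class_F by (simp add: in_class_F_def)

lemma space_eq_UNIV [simp]: "space \<mu> = UNIV"
  using sets_eq_imp_space_eq[OF sets_eq_borel] by simp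

lemma measure_unit_interval: "measure \<mu> {0..1} = 1"
  using in_class_F by (simp add: in_class_F_def)

lemma distr_reflect: "distr \<mu> borel (\<lambda>x. 1 - x) = \<mu>"
  using in_class_F by (simp add: in_class_F_def)

lemma measure_singleton: "measure \<mu> {y} = 0"
  using in_class_F by (simp add: in_class_F_def)

lemma measure_reflect:
  assumes "A \<in> sets borel" shows "measure \<mu> ((\<lambda>y. 1 - y) -` A) = measure \<mu> A"
proof -
  have "(\<lambda>y::real. 1 - y) \<in> borel_measurable \<mu>" by measurable
  then show ?thesis using measure_distr[of "\<lambda>y. 1 - y" \<mu> borel A] assms by (simp add: distr_reflect)
qed

abbreviation draws :: "nat \<Rightarrow> (nat \<Rightarrow> real) measure" where
  "draws k \<equiv> PiM {..<k} (\<lambda>_. \<mu>)"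

sublocale draws: finite_product_prob_space "\<lambda>_::nat. \<mu>" "{..<k}" for k
  by unfold_locales simp_all

lemma sets_draws: "sets (draws k) = sets (PiM {..<k} (\<lambda>_. borel))"
  by (rule sets_PiM_cong) auto

lemma space_draws: "space (draws k) = {..<k} \<rightarrow>\<^sub>E UNIV"
  by (simp add: space_PiM)

lemma measurable_draws_winner_position:
  "0 < k \<Longrightarrow> winner_position k \<in> measurable (draws k) (subprob_algebra borel)"
  unfolding measurable_cong_sets[OF sets_draws refl] by (rule measurable_winner_position)

lemma AE_draws_unit: "AE xs in draws k. \<forall>l<k. xs l \<in> {0..1}"
proof -
  have "AE x in \<mu>. x \<in> {0..1}" by (rule AE_prob_1) (simp add: measure_unit_interval)
  then have "AE xs in draws k. \<forall>l\<in>{..<k}. xs l \<in> {0..1}"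
    by (intro AE_finite_allI AE_PiM_component) (auto intro: prob_space_F)
  then show ?thesis by (rule eventually_mono) simp
qed

lemma AE_draws_avoid:
  assumes "l < k" shows "AE xs in draws k. xs l \<noteq> y"
proof -
  have "{y} \<in> null_sets \<mu>"
    by (rule null_setsI) (simp_all add: emeasure_eq_measure measure_singleton)
  then have "AE x in \<mu>. x \<notin> {y}" by (rule AE_not_in)
  then have "AE x in \<mu>. x \<noteq> y" by simp
  then show ?thesis using assms by (intro AE_PiM_component) (auto intro: prob_space_F)
qed

text \<open>Integrating out coordinate \<open>l\<close>, every section of the tie event is a single point.\<close>

lemma AE_draws_distinct:
  assumes "j < k" "l < k" "j \<noteq> l"
  shows "AE xs in draws k. xs j \<noteq> xs l"
proof -
  define E where "E = {xs \<in> space (draws k). xs j = xs l}"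
  have E: "E \<in> sets (draws k)"
    unfolding E_def measurable_cong_sets[OF sets_draws refl]
    using measurable_profile_component [measurable] by measurable
  define J where "J = {..<k} - {l}"
  have J: "{..<k} = insert l J" "l \<notin> J" "finite J" using assms unfolding J_def by auto
  have "emeasure (draws k) E = (\<integral>\<^sup>+ xs. indicator E xs \<partial>draws k)" using E by simp
  also have "\<dots> = (\<integral>\<^sup>+ xs. (\<integral>\<^sup>+ y. indicator E (xs(l := y)) \<partial>\<mu>) \<partial>PiM J (\<lambda>_. \<mu>))"
    using E unfolding J(1) by (intro draws.product_nn_integral_insert J(2,3)) simp
  also have "\<dots> = (\<integral>\<^sup>+ xs. 0 \<partial>PiM J (\<lambda>_. \<mu>))"
  proof (rule nn_integral_cong)
    fix xs assume xs: "xs \<in> space (PiM J (\<lambda>_. \<mu>))"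
    have "indicator E (xs(l := y)) = (indicator {xs j} y :: ennreal)" for y
    proof -
      have "xs(l := y) \<in> space (draws k)"
        using xs J(1) by (auto simp: space_PiM PiE_iff extensional_def)
      then show ?thesis using assms(3) by (auto simp: E_def indicator_def)
    qed
    then have "(\<integral>\<^sup>+ y. indicator E (xs(l := y)) \<partial>\<mu>) = emeasure \<mu> {xs j}"
      by (simp add: nn_integral_indicator)
    then show "(\<integral>\<^sup>+ y. indicator E (xs(l := y)) \<partial>\<mu>) = 0"
      by (simp add: emeasure_eq_measure measure_singleton)
  qed
  finally have "E \<in> null_sets (draws k)" using E by (intro null_setsI) simp_all
  then show ?thesis by (rule AE_I') (auto simp: E_def)
qed

lemma AE_draws_inj: "AE xs in draws k. inj_on xs {..<k}"
proof -
  have "AE xs in draws k. \<forall>j\<in>{..<k}. \<forall>l\<in>{..<k}. j \<noteq> l \<longrightarrow> xs j \<noteq> xs l"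
  proof (intro AE_finite_allI)
    fix j l assume "j \<in> {..<k}" "l \<in> {..<k}"
    then show "AE xs in draws k. j \<noteq> l \<longrightarrow> xs j \<noteq> xs l"
      by (cases "j = l") (simp_all add: AE_draws_distinct)
  qed simp_all
  then show ?thesis by (rule eventually_mono) (auto simp: inj_on_def)
qed

text \<open>\<open>compose {..<k}\<close> restricts the reflected profile to \<open>{..<k}\<close>, keeping it in \<open>space (draws k)\<close>.\<close>

lemma distr_draws_reflect: "distr (draws k) (draws k) (compose {..<k} (\<lambda>x. 1 - x)) = draws k"
proof -
  have reflect: "(\<lambda>x::real. 1 - x) \<in> measurable \<mu> \<mu>"
    unfolding measurable_cong_sets[OF sets_eq_borel sets_eq_borel] by simp
  have "product_prob_space (\<lambda>_::nat. \<mu>)" by (intro product_prob_spaceI prob_space_F)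
  then have "distr (draws k) (draws k) (compose {..<k} (\<lambda>x. 1 - x))
      = PiM {..<k} (\<lambda>_. distr \<mu> \<mu> (\<lambda>x. 1 - x))"
    by (intro distr_PiM_finite_prob_space reflect) simp_all
  also have "distr \<mu> \<mu> (\<lambda>x. 1 - x) = distr \<mu> borel (\<lambda>x. 1 - x)" by (rule distr_cong) auto
  finally show ?thesis by (simp only: distr_reflect)
qed

lemma measurable_draws_reflect: "compose {..<k} (\<lambda>x. 1 - x) \<in> measurable (draws k) (draws k)"
  unfolding compose_def
proof (rule measurable_restrict)
  fix l :: nat assume "l \<in> {..<k}"
  then show "(\<lambda>xs. 1 - xs l) \<in> measurable (draws k) \<mu>"
    unfolding measurable_cong_sets[OF refl sets_eq_borel] by measurable
qed

lemma prob_space_plurality_step: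
  assumes "0 < k" shows "prob_space (plurality_step k \<mu>)"
  unfolding plurality_step_eq_bind
  by (rule draws.prob_space_bind[OF AE_I2[OF prob_space_winner_position] measurable_draws_winner_position[OF assms]])

lemma sets_plurality_step [simp]: "sets (plurality_step k \<mu>) = sets borel"
  unfolding plurality_step_eq_bind by (rule sets_bind) (auto simp: space_draws PiE_eq_empty_iff)

lemma emeasure_plurality_step:
  "0 < k \<Longrightarrow> A \<in> sets borel
    \<Longrightarrow> emeasure (plurality_step k \<mu>) A = (\<integral>\<^sup>+ xs. emeasure (winner_position k xs) A \<partial>draws k)"
  unfolding plurality_step_eq_bind
  by (rule emeasure_bind[OF _ measurable_draws_winner_position]) (auto simp: space_draws PiE_eq_empty_iff)

lemma measure_plurality_step_unit_interval:
  assumes "0 < k" shows "measure (plurality_step k \<mu>) {0..1} = 1"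
proof -
  interpret step: prob_space "plurality_step k \<mu>" by (rule prob_space_plurality_step[OF assms])
  have "AE xs in draws k. emeasure (winner_position k xs) {0..1} = 1"
    using AE_draws_unit
  proof (rule eventually_mono)
    fix xs :: "nat \<Rightarrow> real" assume "\<forall>l<k. xs l \<in> {0..1}"
    then show "emeasure (winner_position k xs) {0..1} = 1"
      using winners_subset[of k xs] by (intro emeasure_winner_position_eq_1[OF assms]) auto
  qed
  then have "emeasure (plurality_step k \<mu>) {0..1} = (\<integral>\<^sup>+ xs. 1 \<partial>draws k)"
    unfolding emeasure_plurality_step[OF assms atLeastAtMost_borel] by (rule nn_integral_cong_AE)
  then show ?thesis by (simp add: step.emeasure_eq_measure draws.emeasure_space_1)
qed

lemma measure_plurality_step_singleton:
  assumes "0 < k" shows "measure (plurality_step k \<mu>) {y} = 0"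
proof -
  have "AE xs in draws k. \<forall>l\<in>{..<k}. xs l \<noteq> y"
    by (intro AE_finite_allI AE_draws_avoid) auto
  then have "AE xs in draws k. emeasure (winner_position k xs) {y} = 0"
  proof (rule eventually_mono)
    fix xs :: "nat \<Rightarrow> real" assume "\<forall>l\<in>{..<k}. xs l \<noteq> y"
    then show "emeasure (winner_position k xs) {y} = 0"
      using winners_subset[of k xs] by (intro emeasure_winner_position_eq_0[OF assms]) auto
  qed
  then have "emeasure (plurality_step k \<mu>) {y} = (\<integral>\<^sup>+ xs. 0 \<partial>draws k)"
    unfolding emeasure_plurality_step[OF assms borel_singleton[OF sets.empty_sets]]
    by (rule nn_integral_cong_AE)
  then show ?thesis by (simp add: measure_def)
qed

lemma distr_reflect_plurality_step:
  assumes "0 < k" shows "distr (plurality_step k \<mu>) borel (\<lambda>x. 1 - x) = plurality_step k \<mu>"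
proof -
  let ?R = "compose {..<k} (\<lambda>x::real. 1 - x)"
  have "distr (plurality_step k \<mu>) borel (\<lambda>x. 1 - x)
      = draws k \<bind> (\<lambda>xs. distr (winner_position k xs) borel (\<lambda>x. 1 - x))"
    unfolding plurality_step_eq_bind
    by (rule distr_bind[OF measurable_draws_winner_position[OF assms]]) (auto simp: space_draws PiE_eq_empty_iff)
  also have "\<dots> = draws k \<bind> (\<lambda>xs. winner_position k (?R xs))"
    unfolding compose_def by (intro bind_cong refl distr_winner_position_reflect[OF assms])
  also have "\<dots> = distr (draws k) (draws k) ?R \<bind> winner_position k"
    by (rule bind_distr[symmetric, OF measurable_draws_reflect measurable_draws_winner_position[OF assms]])
      (auto simp: space_draws PiE_eq_empty_iff)
  finally show ?thesis by (simp only: distr_draws_reflect plurality_step_eq_bind)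
qed

lemma in_class_F_plurality_step: "0 < k \<Longrightarrow> in_class_F (plurality_step k \<mu>)"
  unfolding in_class_F_def
  using prob_space_plurality_step measure_plurality_step_unit_interval distr_reflect_plurality_step
    measure_plurality_step_singleton by simp

lemma measure_zones:
  assumes "x < 1/2"
  shows "measure \<mu> {y. zone_of x y = Outer_left} = measure \<mu> {..x}"
    and "measure \<mu> {y. zone_of x y = Outer_right} = measure \<mu> {..x}"
    and "measure \<mu> {y. zone_of x y = Inner_left} = 1/2 - measure \<mu> {..x}"
    and "measure \<mu> {y. zone_of x y = Inner_right} = 1/2 - measure \<mu> {..x}"
proof -
  have zones: "{y. zone_of x y = Outer_left} = {..x}"
    "{y. zone_of x y = Outer_right} = (\<lambda>y. 1 - y) -` {..x}"
    "{y. zone_of x y = Inner_left} = {x<..<1/2} \<union> {1/2}"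
    "{y. zone_of x y = Inner_right} = (\<lambda>y. 1 - y) -` {x<..<1/2}"
    using assms by (auto simp: zone_of_eq_iff)
  show OL: "measure \<mu> {y. zone_of x y = Outer_left} = measure \<mu> {..x}"
    and OR: "measure \<mu> {y. zone_of x y = Outer_right} = measure \<mu> {..x}"
    unfolding zones by (simp_all add: measure_reflect)
  have IL: "measure \<mu> {y. zone_of x y = Inner_left} = measure \<mu> {x<..<1/2}"
    unfolding zones by (subst finite_measure_Union) (auto simp: measure_singleton)
  have IR: "measure \<mu> {y. zone_of x y = Inner_right} = measure \<mu> {x<..<1/2}"
    unfolding zones by (simp add: measure_reflect)
  have "1 = (\<Sum>z\<in>UNIV. measure \<mu> {y. zone_of x y = z})"
    using measure_Collect_eq_sum[of "zone_of x" "\<lambda>_. True"] prob_space by simp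
  also have "\<dots> = 2 * measure \<mu> {..x} + 2 * measure \<mu> {x<..<1/2}"
    by (simp add: UNIV_zone OL OR IL IR)
  finally show "measure \<mu> {y. zone_of x y = Inner_left} = 1/2 - measure \<mu> {..x}"
    and "measure \<mu> {y. zone_of x y = Inner_right} = 1/2 - measure \<mu> {..x}"
    using IL IR by simp_all
qed

lemma measure_le_half: "x < 1/2 \<Longrightarrow> measure \<mu> {..x} \<le> 1/2"
  using measure_zones(3)[of x] measure_nonneg[of \<mu> "{y. zone_of x y = Inner_left}"] by linarith

lemma measure_draws_zone_triple:
  "measure (draws 3) {xs \<in> space (draws 3). zone_triple x xs = (a, b, c)}
    = measure \<mu> {y. zone_of x y = a} * measure \<mu> {y. zone_of x y = b} * measure \<mu> {y. zone_of x y = c}"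
proof -
  have space: "xs \<in> space (draws 3) \<longleftrightarrow> xs \<in> extensional {..<3}" for xs
    by (simp add: space_draws PiE_def)
  have box: "xs \<in> PiE {..<3} A \<longleftrightarrow> xs \<in> extensional {..<3} \<and> xs 0 \<in> A 0 \<and> xs 1 \<in> A 1 \<and> xs 2 \<in> A 2"
    for xs and A :: "nat \<Rightarrow> real set"
    by (auto simp: PiE_iff lessThan_3)
  let ?Z = "\<lambda>l::nat. {y. zone_of x y = (if l = 0 then a else if l = 1 then b else c)}"
  have "{xs \<in> space (draws 3). zone_triple x xs = (a, b, c)} = PiE {..<3} ?Z"
  proof (rule set_eqI)
    fix xs
    show "xs \<in> {xs \<in> space (draws 3). zone_triple x xs = (a, b, c)} \<longleftrightarrow> xs \<in> PiE {..<3} ?Z"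
      unfolding box by (simp add: space zone_triple_def)
  qed
  moreover have "?Z l \<in> sets \<mu>" for l
    using pred_zone_of[of x] by (simp add: pred_def)
  then have "measure (draws 3) (PiE {..<3} ?Z) = (\<Prod>l<(3::nat). measure \<mu> (?Z l))"
    by (intro draws.prob_times)
  ultimately show ?thesis by (simp add: lessThan_3 mult.assoc)
qed

lemma measurable_zone_triple [measurable]: "zone_triple x \<in> measurable (draws 3) (count_space UNIV)"
proof (rule measurable_count_space_eq2_countable[THEN iffD2], safe)
  note measurable_profile_component [measurable]
  fix a b c
  have "Measurable.pred (draws 3) (\<lambda>xs. zone_triple x xs = (a, b, c))"
    unfolding measurable_cong_sets[OF sets_draws refl] zone_triple_def by simp
  then show "zone_triple x -` {(a, b, c)} \<inter> space (draws 3) \<in> sets (draws 3)"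
    by (simp add: pred_def vimage_def Int_def conj_commute)
qed simp

lemma sets_inner_forcing: "{xs \<in> space (draws 3). inner_forcing (zone_profile x xs)} \<in> sets (draws 3)"
  unfolding inner_forcing_zone_profile by measurable

lemma measure_inner_forcing:
  assumes "x < 1/2"
  shows "measure (draws 3) {xs \<in> space (draws 3). inner_forcing (zone_profile x xs)}
    = 1 - 3/2 * measure \<mu> {..x} - 2 * measure \<mu> {..x} ^ 3"
proof -
  let ?P = "\<lambda>(a, b, c). inner_forcing {#a, b, c#}"
  let ?q = "\<lambda>z. measure \<mu> {y. zone_of x y = z}"
  have "{xs \<in> space (draws 3). zone_triple x xs = t} \<in> sets (draws 3)" for t
    using measurable_zone_triple[of x] by (simp add: pred_def)
  then have "measure (draws 3) {xs \<in> space (draws 3). inner_forcing (zone_profile x xs)}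
      = (\<Sum>t | ?P t. measure (draws 3) {xs \<in> space (draws 3). zone_triple x xs = t})"
    unfolding inner_forcing_zone_profile by (rule draws.measure_Collect_eq_sum)
  also have "\<dots> = (\<Sum>a\<in>UNIV. \<Sum>b\<in>UNIV. \<Sum>c\<in>UNIV. if inner_forcing {#a, b, c#} then ?q a * ?q b * ?q c else 0)"
    unfolding sum_filter_triples measure_draws_zone_triple prod.case ..
  also have "\<dots> = 1 - 3/2 * measure \<mu> {..x} - 2 * measure \<mu> {..x} ^ 3"
    unfolding sum_inner_forcing measure_zones[OF assms] by (simp add: power2_eq_square power3_eq_cube algebra_simps)
  finally show ?thesis .
qed

lemma measure_plurality_step_inner_ge:
  assumes x: "x < 1/2"
  shows "measure (draws 3) {xs \<in> space (draws 3). inner_forcing (zone_profile x xs)}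
    \<le> measure (plurality_step 3 \<mu>) {x<..<1 - x}"
proof -
  let ?E = "{xs \<in> space (draws 3). inner_forcing (zone_profile x xs)}"
  interpret step: prob_space "plurality_step 3 \<mu>" by (rule prob_space_plurality_step) simp
  have "AE xs in draws 3. indicator ?E xs \<le> emeasure (winner_position 3 xs) {x<..<1 - x}"
    using AE_draws_unit AE_draws_inj
  proof eventually_elim
    case (elim xs)
    show ?case
    proof (cases "xs \<in> ?E")
      case True
      then have "\<forall>l\<in>winners 3 xs. xs l \<in> {x<..<1 - x}"
        using winner_inner_if_inner_forcing[OF x] elim by auto
      then show ?thesis by (simp add: emeasure_winner_position_eq_1 indicator_def)
    qed simp
  qed
  then have "(\<integral>\<^sup>+ xs. indicator ?E xs \<partial>draws 3) \<le> (\<integral>\<^sup>+ xs. emeasure (winner_position 3 xs) {x<..<1 - x} \<partial>draws 3)"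
    by (rule nn_integral_mono_AE)
  moreover have "?E \<in> sets (draws 3)" by (rule sets_inner_forcing)
  ultimately have "emeasure (draws 3) ?E \<le> emeasure (plurality_step 3 \<mu>) {x<..<1 - x}"
    by (simp add: emeasure_plurality_step)
  then show ?thesis by (simp add: draws.emeasure_eq_measure step.emeasure_eq_measure)
qed

lemma plurality_step_cdf_le:
  assumes x: "x < 1/2"
  shows "measure (plurality_step 3 \<mu>) {..x} \<le> 3/4 * measure \<mu> {..x} + measure \<mu> {..x} ^ 3"
proof -
  interpret step: class_F "plurality_step 3 \<mu>" by unfold_locales (rule in_class_F_plurality_step, simp)
  let ?\<nu> = "measure (plurality_step 3 \<mu>)"
  have "(\<lambda>y. 1 - y) -` {..x} = {1 - x..}" by auto
  then have right: "?\<nu> {1 - x..} = ?\<nu> {..x}" using step.measure_reflect[of "{..x}"] by simp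
  have "{..x} \<union> ({x<..<1 - x} \<union> {1 - x..}) = space (plurality_step 3 \<mu>)" using x by auto
  then have "1 = ?\<nu> ({..x} \<union> ({x<..<1 - x} \<union> {1 - x..}))" using step.prob_space by simp
  also have "\<dots> = ?\<nu> {..x} + (?\<nu> {x<..<1 - x} + ?\<nu> {1 - x..})"
    using x by (subst step.finite_measure_Union, auto)+
  finally have "1 = ?\<nu> {..x} + (?\<nu> {x<..<1 - x} + ?\<nu> {1 - x..})" .
  then show ?thesis
    using right measure_plurality_step_inner_ge[OF x] measure_inner_forcing[OF x] by linarith
qed

end

section \<open>Iteration\<close>

lemma in_class_F_replicator:
  "0 < k \<Longrightarrow> in_class_F M0 \<Longrightarrow> in_class_F (replicator k M0 t)"
proof (induction t)
  case (Suc t)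
  then interpret class_F "replicator k M0 t" by unfold_locales simp
  show ?case using in_class_F_plurality_step[OF Suc.prems(1)] by (simp add: replicator_def)
qed (simp add: replicator_def)

lemma iterated_cubic_bound:
  fixes F :: "nat \<Rightarrow> real"
  assumes nonneg: "\<And>n. 0 \<le> F n" and half: "F 0 \<le> 1/2"
    and step: "\<And>n. F (Suc n) \<le> 3/4 * F n + F n ^ 3"
  shows "F n \<le> F 0 * (3/4 + F 0 ^ 2) ^ n"
proof (induction n)
  case (Suc n)
  let ?c = "3/4 + F 0 ^ 2"
  have "F 0 ^ 2 \<le> (1/2) ^ 2" using half nonneg by (intro power_mono)
  then have c: "0 \<le> ?c" "?c \<le> 1" by (simp_all add: power2_eq_square)
  have "F n \<le> F 0 * ?c ^ n" by (rule Suc.IH)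
  also have "\<dots> \<le> F 0" using c nonneg[of 0] by (simp add: mult_left_le power_le_one)
  finally have "F n ^ 2 \<le> F 0 ^ 2" using nonneg by (intro power_mono)
  have "F (Suc n) \<le> F n * (3/4 + F n ^ 2)"
    using step[of n] by (simp add: power2_eq_square power3_eq_cube algebra_simps)
  also have "\<dots> \<le> F n * ?c"
    using \<open>F n ^ 2 \<le> F 0 ^ 2\<close> nonneg by (intro mult_left_mono) simp_all
  also have "\<dots> \<le> F 0 * ?c ^ n * ?c"
    using Suc.IH c by (intro mult_right_mono)
  finally show ?case by (simp add: mult.commute mult.left_commute)
qed simp

lemma replicator_cdf_0: "replicator_cdf k M0 0 x = measure M0 {..x}"
  by (simp add: replicator_cdf_def replicator_def)

lemma replicator_cdf_Suc_le:
  assumes "in_class_F M0" "x < 1/2"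
  shows "replicator_cdf 3 M0 (Suc n) x \<le> 3/4 * replicator_cdf 3 M0 n x + replicator_cdf 3 M0 n x ^ 3"
proof -
  interpret class_F "replicator 3 M0 n" by unfold_locales (rule in_class_F_replicator, use assms(1) in auto)
  show ?thesis using plurality_step_cdf_le[OF assms(2)] by (simp add: replicator_cdf_def replicator_def)
qed

theorem mainTheorem3:
  fixes M0 :: "real measure" and x :: real and t :: nat
  assumes "in_class_F M0" and "x < 1/2" and "t > 0"
  shows "replicator_cdf 3 M0 t x
           \<le> 3/4 * replicator_cdf 3 M0 (t - 1) x + (replicator_cdf 3 M0 (t - 1) x) ^ 3
         \<and> replicator_cdf 3 M0 t x
           \<le> measure M0 {..x} * (3/4 + (measure M0 {..x})^2) ^ t"
proof
  show "replicator_cdf 3 M0 t x \<le> 3/4 * replicator_cdf 3 M0 (t - 1) x + replicator_cdf 3 M0 (t - 1) x ^ 3"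
    using replicator_cdf_Suc_le[OF assms(1,2), of "t - 1"] assms(3) by simp
  interpret class_F M0 by unfold_locales (rule assms(1))
  have "replicator_cdf 3 M0 t x \<le> replicator_cdf 3 M0 0 x * (3/4 + replicator_cdf 3 M0 0 x ^ 2) ^ t"
    by (rule iterated_cubic_bound[where F = "\<lambda>n. replicator_cdf 3 M0 n x"])
      (use replicator_cdf_Suc_le[OF assms(1,2)] measure_le_half[OF assms(2)] in
        \<open>simp_all add: replicator_cdf_def replicator_def\<close>)
  then show "replicator_cdf 3 M0 t x \<le> measure M0 {..x} * (3/4 + measure M0 {..x} ^ 2) ^ t"
    by (simp only: replicator_cdf_0)
qed

end
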